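(* Let $A=\begin{pmatrix} a & b\\ c & d\end{pmatrix}\in SL_2(\mathbb{Z})$ with $c>0$ and $d\neq 0$. (i) If $d>0$, let $S=\begin{pmatrix}0&-1\\1&0\end{pmatrix}$, so $AS=\begin{pmatrix} b&-a\\ d&-c\end{pmatrix}$; then $\epsilon_1(AS)=e^{-3\pi i/4}\epsilon_1(A)$. (ii) If $d<0$, let $S=\begin{pmatrix}0&1\\-1&0\end{pmatrix}$, so $AS=\begin{pmatrix} -b&a\\ -d&c\end{pmatrix}$; then $\epsilon_1(AS)=e^{3\pi i/4}\epsilon_1(A)$.
   Context: For integers $k>0$ and $h$ with $\gcd(h,k)=1$, the Dedekind sum is $s(h,k)=\sum_{r=1}^{k-1}\frac{r}{k}\left(\frac{hr}{k}-\left\lfloor\frac{hr}{k}\right\rfloor-\frac12\right)$. For $M=\begin{pmatrix} a&b\\ c&d\end{pmatrix}\in SL_2(\mathbb{Z})$ with $c>0$, define $\epsilon_1(M)=-i\exp\!\left(3\pi i\left(\frac{a+d}{12c}-s(d,c)\right)\right)$. In both cases the lower-left entry of $AS$ is positive, so $\epsilon_1(AS)$ is defined. *)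

theory Defs
  imports Complex_Main
begin

definition dedekind_sum :: "int \<Rightarrow> int \<Rightarrow> real" where
  "dedekind_sum h k = (\<Sum>r\<in>{1..k-1}. (real_of_int r / real_of_int k) *
      (real_of_int (h*r) / real_of_int k - real_of_int \<lfloor>real_of_int (h*r) / real_of_int k\<rfloor> - 1/2))"

definition eps1 :: "int \<Rightarrow> int \<Rightarrow> int \<Rightarrow> int \<Rightarrow> complex" where
  "eps1 a b c d = - \<i> * exp (3 * pi * \<i> *
      complex_of_real (real_of_int (a + d) / (12 * real_of_int c) - dedekind_sum d c))"

end

theory Submission
  imports Defs "HOL-Number_Theory.Modular_Inverse"
begin

text \<open>
  With \<open>A(h,k) = \<Sum>\<^sub>r r (h r mod k)\<close> one has \<open>s(h,k) = A(h,k)/k\<^sup>2 - (k-1)/4\<close>, so Dedekind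
  reciprocity is a polynomial identity between \<open>A(h,k)\<close> and \<open>A(k,h)\<close>. It comes from
  evaluating \<open>\<Sum> max (h x) (k y)\<close> over the grid \<open>1 \<le> x < k\<close>, \<open>1 \<le> y < h\<close> in two ways:
  splitting along the diagonal \<open>h x = k y\<close>, which contains no grid point since
  \<open>gcd(h,k) = 1\<close>, yields the sums \<open>\<Sum>\<^sub>r r \<lfloor>h r/k\<rfloor>\<close>; summing row by row yields a closed
  form, because \<open>r \<mapsto> h r mod k\<close> permutes \<open>{1..k-1}\<close>.
  With reciprocity, \<open>s(-h,k) = -s(h,k)\<close> and \<open>a d - b c = 1\<close>, the exponents of
  \<open>\<epsilon>\<^sub>1(AS)\<close> and \<open>\<epsilon>\<^sub>1(A)\<close> differ by exactly \<open>\<mp>1/4\<close>.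
\<close>

lemma double_sum_Icc_int:
  fixes n :: int
  assumes "0 \<le> n"
  shows "2 * (\<Sum>r\<in>{1..n}. r) = n * (n + 1)"
  using assms
proof (induction n rule: int_ge_induct)
  case (step i)
  have "(\<Sum>r\<in>{1..i+1}. r) = (\<Sum>r\<in>{1..i}. r) + (i + 1)"
    using atLeastAtMostPlus1_int_conv[of 1 i] step.hyps by (simp add: add.commute)
  with step.IH show ?case by (simp add: algebra_simps)
qed simp

lemma six_sum_power2_Icc_int:
  fixes n :: int
  assumes "0 \<le> n"
  shows "6 * (\<Sum>r\<in>{1..n}. r\<^sup>2) = n * (n + 1) * (2 * n + 1)"
  using assms
proof (induction n rule: int_ge_induct)
  case (step i)
  have "(\<Sum>r\<in>{1..i+1}. r\<^sup>2) = (\<Sum>r\<in>{1..i}. r\<^sup>2) + (i + 1)\<^sup>2"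
    using atLeastAtMostPlus1_int_conv[of 1 i] step.hyps by (simp add: add.commute)
  with step.IH show ?case by (simp add: algebra_simps power2_eq_square)
qed simp

lemma coprime_not_dvd_mult_Icc:
  fixes h k x :: int
  assumes "coprime h k" "x \<in> {1..k-1}"
  shows "\<not> k dvd h * x"
  using assms by (auto simp: coprime_commute coprime_dvd_mult_right_iff dest: zdvd_imp_le)

lemma bij_betw_mult_mod_Icc:
  fixes h k :: int
  assumes "coprime h k"
  shows "bij_betw (\<lambda>x. h * x mod k) {1..k-1} {1..k-1}"
  using bij_betw_int_remainders_mult[OF assms]
    atLeastLessThanPlusOne_atLeastAtMost_int[of 1 "k - 1"]
  by simp

lemma of_int_divide_minus_of_int_div:
  fixes z k :: int
  assumes "k \<noteq> 0"
  shows "of_int z / of_int k - of_int (z div k) = (of_int (z mod k) / of_int k :: 'a :: field_char_0)"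
proof -
  have "(of_int z :: 'a) = of_int k * of_int (z div k) + of_int (z mod k)"
    by (metis div_mult_mod_eq mult.commute of_int_add of_int_mult)
  then show ?thesis
    using assms by (simp add: field_simps)
qed

definition residue_moment :: "int \<Rightarrow> int \<Rightarrow> int" where
  "residue_moment h k = (\<Sum>r\<in>{1..k-1}. r * (h * r mod k))"

definition quotient_moment :: "int \<Rightarrow> int \<Rightarrow> int" where
  "quotient_moment h k = (\<Sum>r\<in>{1..k-1}. r * (h * r div k))"

lemma residue_moment_eq_quotient_moment:
  "residue_moment h k = h * (\<Sum>r\<in>{1..k-1}. r\<^sup>2) - k * quotient_moment h k"
proof -
  have "r * (h * r mod k) = h * r\<^sup>2 - k * (r * (h * r div k))" for r
  proof -
    have "h * r mod k = h * r - k * (h * r div k)"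
      by (simp add: minus_mult_div_eq_mod)
    then show ?thesis
      by algebra
  qed
  then show ?thesis
    unfolding residue_moment_def quotient_moment_def
    by (simp add: sum_subtractf sum_distrib_left)
qed

lemma dedekind_sum_eq_residue_moment:
  assumes "k > 0"
  shows "dedekind_sum h k
    = real_of_int (residue_moment h k) / (real_of_int k)\<^sup>2 - (real_of_int k - 1) / 4"
proof -
  have "dedekind_sum h k = (\<Sum>r\<in>{1..k-1}. real_of_int (r * (h * r mod k)) / (real_of_int k)\<^sup>2
        - real_of_int r / (2 * real_of_int k))"
    unfolding dedekind_sum_def floor_divide_of_int_eq
      of_int_divide_minus_of_int_div[OF less_imp_neq[OF assms, symmetric]]
    using assms by (intro sum.cong refl) (simp add: field_simps power2_eq_square)
  also have "\<dots> = real_of_int (residue_moment h k) / (real_of_int k)\<^sup>2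
        - real_of_int (2 * (\<Sum>r\<in>{1..k-1}. r)) / (4 * real_of_int k)"
    unfolding residue_moment_def by (simp add: sum_subtractf sum_divide_distrib)
  also have "real_of_int (2 * (\<Sum>r\<in>{1..k-1}. r)) / (4 * real_of_int k) = (real_of_int k - 1) / 4"
  proof -
    have "2 * (\<Sum>r\<in>{1..k-1}. r) = (k - 1) * k"
      using double_sum_Icc_int[of "k - 1"] assms by simp
    then show ?thesis
      using assms by simp
  qed
  finally show ?thesis .
qed

lemma dedekind_sum_uminus:
  fixes h k :: int
  assumes "k > 0" "coprime h k"
  shows "dedekind_sum (-h) k = - dedekind_sum h k"
proof -
  have "real_of_int r / real_of_int k * (real_of_int (- h * r mod k) / real_of_int k - 1 / 2)
      = - (real_of_int r / real_of_int k * (real_of_int (h * r mod k) / real_of_int k - 1 / 2))"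
    if "r \<in> {1..k-1}" for r
  proof -
    have "h * r mod k \<noteq> 0"
      using coprime_not_dvd_mult_Icc[OF assms(2) that] by (simp add: dvd_eq_mod_eq_0)
    then have complement:
      "real_of_int (- h * r mod k) = real_of_int k - real_of_int (h * r mod k)"
      using zmod_zminus1_eq_if[of "h * r" k] by simp
    show ?thesis
      unfolding complement using assms(1) by (simp add: field_simps)
  qed
  then show ?thesis
    unfolding dedekind_sum_def floor_divide_of_int_eq sum_negf[symmetric]
      of_int_divide_minus_of_int_div[OF less_imp_neq[OF assms(1), symmetric]]
    by (intro sum.cong refl) simp
qed

lemma filter_Icc_mult_less:
  fixes h k z :: int
  assumes "k > 0" "z < k * h" "\<not> k dvd z"
  shows "{y\<in>{1..h-1}. k * y < z} = {1..z div k}"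
proof -
  have below: "k * (z div k) < z"
  proof -
    have "z mod k \<noteq> 0"
      using assms(3) by (simp add: dvd_eq_mod_eq_0)
    then show ?thesis
      using assms(1) pos_mod_sign[of k z] mult_div_mod_eq[of k z] by linarith
  qed
  have iff: "k * y < z \<longleftrightarrow> y \<le> z div k" for y
  proof
    assume "k * y < z"
    then show "y \<le> z div k"
      using zdiv_mono1[of "k * y" z k] assms(1) by simp
  next
    assume "y \<le> z div k"
    then have "k * y \<le> k * (z div k)"
      using assms(1) by simp
    then show "k * y < z"
      using below by simp
  qed
  have "z div k < h"
    using below assms(1,2) mult_less_cancel_left_pos[of k "z div k" h] by linarith
  then have "{y\<in>{1..h-1}. y \<le> z div k} = {1..z div k}"
    by auto
  then show ?thesis
    by (simp only: iff)
qed

lemma sum_if_mult_less_row: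
  fixes h k z :: int
  assumes "k > 0" "0 \<le> z" "z < k * h" "\<not> k dvd z"
  shows "(\<Sum>y\<in>{1..h-1}. if k * y < z then z else 0) = z * (z div k)"
proof -
  have "(\<Sum>y\<in>{1..h-1}. if k * y < z then z else 0) = (\<Sum>y\<in>{y\<in>{1..h-1}. k * y < z}. z)"
    by (rule sum.inter_filter[symmetric]) simp
  then show ?thesis
    unfolding filter_Icc_mult_less[OF assms(1,3,4)]
    using assms(1,2) by (simp add: pos_imp_zdiv_nonneg_iff)
qed

lemma sum_max_row:
  fixes h k z :: int
  assumes "k > 0" "0 \<le> z" "z < k * h" "\<not> k dvd z"
  shows "2 * k * (\<Sum>y\<in>{1..h-1}. max z (k * y))
    = 2 * k\<^sup>2 * (\<Sum>y\<in>{1..h-1}. y) + z\<^sup>2 - (z mod k)\<^sup>2 - k * z + k * (z mod k)"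
proof -
  define m where "m = z div k"
  have "m \<ge> 0"
    unfolding m_def using assms(1,2) by (simp add: pos_imp_zdiv_nonneg_iff)
  have "(\<Sum>y\<in>{1..h-1}. max z (k * y))
      = (\<Sum>y\<in>{1..h-1}. k * y + (if k * y < z then z - k * y else 0))"
    by (intro sum.cong refl) auto
  also have "\<dots> = k * (\<Sum>y\<in>{1..h-1}. y) + (\<Sum>y\<in>{1..h-1}. if k * y < z then z - k * y else 0)"
    by (simp add: sum.distrib sum_distrib_left)
  also have "(\<Sum>y\<in>{1..h-1}. if k * y < z then z - k * y else 0) = (\<Sum>y\<in>{1..m}. z - k * y)"
    unfolding m_def filter_Icc_mult_less[OF assms(1,3,4), symmetric]
    by (rule sum.inter_filter[symmetric]) simp
  also have "\<dots> = m * z - k * (\<Sum>y\<in>{1..m}. y)"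
    using \<open>m \<ge> 0\<close> by (simp add: sum_subtractf sum_distrib_left)
  finally have row: "(\<Sum>y\<in>{1..h-1}. max z (k * y))
      = k * (\<Sum>y\<in>{1..h-1}. y) + (m * z - k * (\<Sum>y\<in>{1..m}. y))" .
  have "z = k * m + z mod k"
    unfolding m_def by simp
  with row double_sum_Icc_int[OF \<open>m \<ge> 0\<close>] show ?thesis
    by algebra
qed

abbreviation max_grid_sum :: "int \<Rightarrow> int \<Rightarrow> int" where
  "max_grid_sum h k \<equiv> \<Sum>x\<in>{1..k-1}. \<Sum>y\<in>{1..h-1}. max (h * x) (k * y)"

lemma max_grid_sum_eq_quotient_moments:
  fixes h k :: int
  assumes "h > 0" "k > 0" "coprime h k"
  shows "max_grid_sum h k = h * quotient_moment h k + k * quotient_moment k h"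
proof -
  have row: "(\<Sum>y\<in>{1..h-1}. if k * y < h * x then h * x else 0) = h * (x * (h * x div k))"
    if "h > 0" "k > 0" "coprime h k" "x \<in> {1..k-1}" for h k x :: int
    using sum_if_mult_less_row[of k "h * x" h] coprime_not_dvd_mult_Icc[of h k x] that
    by (simp add: mult.commute mult.left_commute)
  have "max_grid_sum h k = (\<Sum>x\<in>{1..k-1}. \<Sum>y\<in>{1..h-1}.
      (if k * y < h * x then h * x else 0) + (if h * x < k * y then k * y else 0))"
  proof (intro sum.cong refl)
    fix x y
    assume "x \<in> {1..k-1}"
    then have "h * x \<noteq> k * y"
      using coprime_not_dvd_mult_Icc[OF assms(3)] by (metis dvd_triv_left)
    then show "max (h * x) (k * y)
      = (if k * y < h * x then h * x else 0) + (if h * x < k * y then k * y else 0)"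
      by auto
  qed
  also have "\<dots> = (\<Sum>x\<in>{1..k-1}. \<Sum>y\<in>{1..h-1}. if k * y < h * x then h * x else 0)
      + (\<Sum>y\<in>{1..h-1}. \<Sum>x\<in>{1..k-1}. if h * x < k * y then k * y else 0)"
    by (simp add: sum.distrib sum.swap[of _ "{1..h-1}"])
  also have "\<dots> = h * quotient_moment h k + k * quotient_moment k h"
    using row[OF assms] row[OF assms(2,1)] assms(3)
    by (simp add: quotient_moment_def sum_distrib_left coprime_commute)
  finally show ?thesis .
qed

lemma max_grid_sum_closed_form:
  fixes h k :: int
  assumes "h > 0" "k > 0" "coprime h k"
  shows "2 * k * max_grid_sum h k = (k - 1) * (2 * k\<^sup>2 * (\<Sum>y\<in>{1..h-1}. y))
    + (h\<^sup>2 - 1) * (\<Sum>x\<in>{1..k-1}. x\<^sup>2) - k * (h - 1) * (\<Sum>x\<in>{1..k-1}. x)"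
proof -
  note permute = sum.reindex_bij_betw[OF bij_betw_mult_mod_Icc[OF assms(3)]]
  have "2 * k * max_grid_sum h k = (\<Sum>x\<in>{1..k-1}. 2 * k * (\<Sum>y\<in>{1..h-1}. max (h * x) (k * y)))"
    by (rule sum_distrib_left)
  also have "\<dots> = (\<Sum>x\<in>{1..k-1}. 2 * k\<^sup>2 * (\<Sum>y\<in>{1..h-1}. y) + h\<^sup>2 * x\<^sup>2
      - (h * x mod k)\<^sup>2 - k * h * x + k * (h * x mod k))"
  proof (intro sum.cong refl)
    fix x assume "x \<in> {1..k-1}"
    then have "0 \<le> h * x" "h * x < k * h" "\<not> k dvd h * x"
      using assms(1) coprime_not_dvd_mult_Icc[OF assms(3)] by (auto simp: mult.commute[of k h])
    then show "2 * k * (\<Sum>y\<in>{1..h-1}. max (h * x) (k * y))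
      = 2 * k\<^sup>2 * (\<Sum>y\<in>{1..h-1}. y) + h\<^sup>2 * x\<^sup>2 - (h * x mod k)\<^sup>2 - k * h * x + k * (h * x mod k)"
      using sum_max_row[OF assms(2)] by (simp add: power_mult_distrib)
  qed
  also have "\<dots> = (k - 1) * (2 * k\<^sup>2 * (\<Sum>y\<in>{1..h-1}. y)) + h\<^sup>2 * (\<Sum>x\<in>{1..k-1}. x\<^sup>2)
      - (\<Sum>x\<in>{1..k-1}. (h * x mod k)\<^sup>2) - k * h * (\<Sum>x\<in>{1..k-1}. x)
      + k * (\<Sum>x\<in>{1..k-1}. h * x mod k)"
    using assms(2) by (simp add: sum.distrib sum_subtractf sum_distrib_left mult.assoc)
  also have "(\<Sum>x\<in>{1..k-1}. (h * x mod k)\<^sup>2) = (\<Sum>x\<in>{1..k-1}. x\<^sup>2)"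
    using permute[of power2] by simp
  also have "(\<Sum>x\<in>{1..k-1}. h * x mod k) = (\<Sum>x\<in>{1..k-1}. x)"
    using permute[of id] by simp
  finally show ?thesis
    by (simp add: algebra_simps)
qed

lemma residue_moment_reciprocity:
  fixes h k :: int
  assumes "h > 0" "k > 0" "coprime h k"
  shows "12 * h\<^sup>2 * residue_moment h k + 12 * k\<^sup>2 * residue_moment k h
    = 3 * h\<^sup>2 * k\<^sup>2 * (h + k - 3) + h * k * (h\<^sup>2 + k\<^sup>2 + 1)"
proof -
  have "2 * (\<Sum>y\<in>{1..h-1}. y) = (h - 1) * h" "2 * (\<Sum>y\<in>{1..k-1}. y) = (k - 1) * k"
    "6 * (\<Sum>y\<in>{1..h-1}. y\<^sup>2) = (h - 1) * h * (2 * h - 1)"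
    "6 * (\<Sum>y\<in>{1..k-1}. y\<^sup>2) = (k - 1) * k * (2 * k - 1)"
    using double_sum_Icc_int[of "h - 1"] double_sum_Icc_int[of "k - 1"]
      six_sum_power2_Icc_int[of "h - 1"] six_sum_power2_Icc_int[of "k - 1"] assms(1,2)
    by (simp_all add: algebra_simps)
  with residue_moment_eq_quotient_moment[of h k] residue_moment_eq_quotient_moment[of k h]
    max_grid_sum_eq_quotient_moments[OF assms] max_grid_sum_closed_form[OF assms]
  show ?thesis
    by algebra
qed

theorem dedekind_sum_reciprocity:
  fixes h k :: int
  assumes "h > 0" "k > 0" "coprime h k"
  shows "dedekind_sum h k + dedekind_sum k h
    = - 1 / 4 + ((real_of_int h)\<^sup>2 + (real_of_int k)\<^sup>2 + 1) / (12 * real_of_int h * real_of_int k)"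
proof -
  have "12 * (real_of_int h)\<^sup>2 * real_of_int (residue_moment h k)
      + 12 * (real_of_int k)\<^sup>2 * real_of_int (residue_moment k h)
    = 3 * (real_of_int h)\<^sup>2 * (real_of_int k)\<^sup>2 * (real_of_int h + real_of_int k - 3)
      + real_of_int h * real_of_int k * ((real_of_int h)\<^sup>2 + (real_of_int k)\<^sup>2 + 1)"
    using arg_cong[OF residue_moment_reciprocity[OF assms], of real_of_int] by simp
  then show ?thesis
    unfolding dedekind_sum_eq_residue_moment[OF assms(2)] dedekind_sum_eq_residue_moment[OF assms(1)]
    using assms(1,2) by (simp add: field_simps power2_eq_square) algebra
qed

lemma coprime_of_det_eq_1:
  fixes a b c d :: int
  assumes "a * d - b * c = 1"
  shows "coprime c d"
proof (rule coprimeI)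
  fix e
  assume "e dvd c" "e dvd d"
  then have "e dvd a * d - b * c"
    by simp
  with assms show "is_unit e"
    by simp
qed

lemma eps1_eq_exp_mult_eps1:
  fixes t :: real
  assumes "real_of_int (a' + d') / (12 * real_of_int c') - dedekind_sum d' c'
      = real_of_int (a + d) / (12 * real_of_int c) - dedekind_sum d c + t"
  shows "eps1 a' b' c' d' = exp (3 * pi * \<i> * complex_of_real t) * eps1 a b c d"
  unfolding eps1_def assms by (simp add: distrib_left exp_add)

lemma eps1_mult_S_pos:
  fixes a b c d :: int
  assumes det: "a * d - b * c = 1" and "c > 0" "d > 0"
  shows "eps1 b (-a) d (-c) = exp (- 3 * pi * \<i> / 4) * eps1 a b c d"
proof -
  have "coprime c d"
    using coprime_of_det_eq_1[OF det] .
  then have "dedekind_sum (-c) d = - dedekind_sum c d"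
    and "dedekind_sum c d + dedekind_sum d c
      = - 1 / 4 + ((real_of_int c)\<^sup>2 + (real_of_int d)\<^sup>2 + 1) / (12 * real_of_int c * real_of_int d)"
    using dedekind_sum_uminus[OF \<open>d > 0\<close>] dedekind_sum_reciprocity[OF \<open>c > 0\<close> \<open>d > 0\<close>]
    by (simp_all add: coprime_commute)
  moreover have "real_of_int a * real_of_int d - real_of_int b * real_of_int c = 1"
    using arg_cong[OF det, of real_of_int] by simp
  ultimately have "real_of_int (b + - c) / (12 * real_of_int d) - dedekind_sum (- c) d
      = real_of_int (a + d) / (12 * real_of_int c) - dedekind_sum d c + (- 1 / 4)"
    using assms(2,3) by (simp add: field_simps power2_eq_square)
  then have "eps1 b (-a) d (-c) = exp (3 * pi * \<i> * complex_of_real (- 1 / 4)) * eps1 a b c d"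
    by (rule eps1_eq_exp_mult_eps1)
  then show ?thesis
    by (simp add: field_simps)
qed

lemma eps1_mult_S_neg:
  fixes a b c d :: int
  assumes det: "a * d - b * c = 1" and "c > 0" "d < 0"
  shows "eps1 (-b) a (-d) c = exp (3 * pi * \<i> / 4) * eps1 a b c d"
proof -
  have "coprime c (-d)"
    using coprime_of_det_eq_1[OF det] by simp
  then have "dedekind_sum d c = - dedekind_sum (-d) c"
    and "dedekind_sum c (-d) + dedekind_sum (-d) c
      = - 1 / 4 + ((real_of_int c)\<^sup>2 + (real_of_int (-d))\<^sup>2 + 1) / (12 * real_of_int c * real_of_int (-d))"
    using dedekind_sum_uminus[OF \<open>c > 0\<close>, of "-d"]
      dedekind_sum_reciprocity[OF \<open>c > 0\<close>, of "-d"] assms(3)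
    by (simp_all add: coprime_commute)
  moreover have "real_of_int a * real_of_int d - real_of_int b * real_of_int c = 1"
    using arg_cong[OF det, of real_of_int] by simp
  ultimately have "real_of_int (- b + c) / (12 * real_of_int (-d)) - dedekind_sum c (-d)
      = real_of_int (a + d) / (12 * real_of_int c) - dedekind_sum d c + 1 / 4"
    using assms(2,3) by (simp add: field_simps power2_eq_square)
  then have "eps1 (-b) a (-d) c = exp (3 * pi * \<i> * complex_of_real (1 / 4)) * eps1 a b c d"
    by (rule eps1_eq_exp_mult_eps1)
  then show ?thesis
    by (simp add: field_simps)
qed

theorem lemma2:
  fixes a b c d :: int
  assumes det: "a * d - b * c = 1"
    and c_pos: "c > 0"
    and d_nz: "d \<noteq> 0"
  shows "(d > 0 \<longrightarrow> eps1 b (-a) d (-c) = exp (- 3 * pi * \<i> / 4) * eps1 a b c d)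
       \<and> (d < 0 \<longrightarrow> eps1 (-b) a (-d) c = exp (3 * pi * \<i> / 4) * eps1 a b c d)"
  using eps1_mult_S_pos[OF det c_pos] eps1_mult_S_neg[OF det c_pos] by blast

end
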